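(* Let $N\geq 1$ and let $U\in M_{2N}(\mathbb{C})$ be a unitary matrix that is antisymmetric, i.e. $U^{\rm T}=-U$. Define the linear map $\Phi^U_{4N}:M_{4N}(\mathbb{C})\to M_{4N}(\mathbb{C})$ as follows: writing $X\in M_{4N}(\mathbb{C})$ in block form $X=\begin{pmatrix} X_{11} & X_{12}\\ X_{21} & X_{22}\end{pmatrix}$ with $X_{kl}\in M_{2N}(\mathbb{C})$, $$\Phi^U_{4N}(X)=\frac{1}{2N}\begin{pmatrix} \mathbb{I}_{2N}\,\mathrm{Tr}X_{22} & -\big(X_{12}+UX_{21}^{\rm T}U^\dagger\big)\\ -\big(X_{21}+UX_{12}^{\rm T}U^\dagger\big) & \mathbb{I}_{2N}\,\mathrm{Tr}X_{11}\end{pmatrix}.$$ Then $\Phi^U_{4N}$ is a positive map, i.e. $\Phi^U_{4N}(X)\geq 0$ for every positive semidefinite $X\in M_{4N}(\mathbb{C})$.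
   Context: $X^{\rm T}$ denotes the transpose, $U^\dagger$ the conjugate transpose, and $\mathbb{I}_{2N}$ the $2N\times 2N$ identity matrix. *)

theory Defs
  imports "Jordan_Normal_Form.Schur_Decomposition"
begin

definition mtrace :: "complex mat \<Rightarrow> complex" where
  "mtrace A = (\<Sum>i<dim_row A. A $$ (i, i))"

definition unitary_mat :: "nat \<Rightarrow> complex mat \<Rightarrow> bool" where
  "unitary_mat n U \<longleftrightarrow> U \<in> carrier_mat n n \<and>
     U * mat_adjoint U = 1\<^sub>m n \<and> mat_adjoint U * U = 1\<^sub>m n"

definition psd_mat :: "nat \<Rightarrow> complex mat \<Rightarrow> bool" where
  "psd_mat n X \<longleftrightarrow> X \<in> carrier_mat n n \<and> mat_adjoint X = X \<and>
     (\<forall>v \<in> carrier_vec n. Im (conjugate v \<bullet> (X *\<^sub>v v)) = 0 \<and>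
                             0 \<le> Re (conjugate v \<bullet> (X *\<^sub>v v)))"

definition Phi :: "nat \<Rightarrow> complex mat \<Rightarrow> complex mat \<Rightarrow> complex mat" where
  "Phi N U X = (case split_block X (2*N) (2*N) of (X11, X12, X21, X22) \<Rightarrow>
     (1 / of_nat (2*N)) \<cdot>\<^sub>m four_block_mat
        (mtrace X22 \<cdot>\<^sub>m 1\<^sub>m (2*N))
        (- (X12 + U * transpose_mat X21 * mat_adjoint U))
        (- (X21 + U * transpose_mat X12 * mat_adjoint U))
        (mtrace X11 \<cdot>\<^sub>m 1\<^sub>m (2*N)))"

end

theory Submission
  imports Defs
begin

text \<open>
  Write \<open>v = (a, b)\<close> and put \<open>r = U\<^sup>T conj a\<close>, \<open>p = U\<^sup>T conj b\<close>.
  Antisymmetry of \<open>U\<close> makes \<open>r\<close> orthogonal to \<open>a\<close> and \<open>p\<close> to \<open>b\<close>,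
  unitarity gives \<open>|r| = |a|\<close> and \<open>|p| = |b|\<close>, and conjugating by \<open>U\<close> turns the
  transposed off-diagonal blocks into \<open>X\<close>-forms evaluated at \<open>r, p\<close>. So
  \<open>2N \<langle>v, \<Phi>(X) v\<rangle> = |a|\<^sup>2 Tr X\<^sub>2\<^sub>2 + |b|\<^sup>2 Tr X\<^sub>1\<^sub>1\<close> minus the cross terms of \<open>X\<close> at
  \<open>(a, b)\<close> and at \<open>(r, p)\<close>. Positivity of \<open>X\<close> at \<open>(|b|\<^sup>2 a, -|a|\<^sup>2 b)\<close> and
  \<open>(|b|\<^sup>2 r, -|a|\<^sup>2 p)\<close> bounds those cross terms by diagonal-block terms, and these are
  controlled by \<open>\<langle>a, Y a\<rangle> + \<langle>r, Y r\<rangle> \<le> |a|\<^sup>2 Tr Y\<close> for \<open>Y \<ge> 0\<close> and orthogonal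
  \<open>a, r\<close> of equal length.
\<close>

definition sesq :: "complex mat \<Rightarrow> complex vec \<Rightarrow> complex vec \<Rightarrow> complex" where
  "sesq A x y = conjugate x \<bullet> (A *\<^sub>v y)"

lemma sesq_expand:
  assumes "A \<in> carrier_mat n n" "x \<in> carrier_vec n" "y \<in> carrier_vec n"
  shows "sesq A x y = (\<Sum>i<n. \<Sum>j<n. cnj (x$i) * A$$(i,j) * y$j)"
  using assms unfolding sesq_def scalar_prod_def mult_mat_vec_def row_def
  by (auto simp: sum_distrib_left atLeast0LessThan mult.assoc intro!: sum.cong)

lemma sesq_add_left:
  assumes "A \<in> carrier_mat n n" "x \<in> carrier_vec n" "z \<in> carrier_vec n" "y \<in> carrier_vec n"
  shows "sesq A (x + z) y = sesq A x y + sesq A z y"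
  using assms by (simp add: sesq_expand distrib_right sum.distrib)

lemma sesq_add_right:
  assumes "A \<in> carrier_mat n n" "x \<in> carrier_vec n" "y \<in> carrier_vec n" "z \<in> carrier_vec n"
  shows "sesq A x (y + z) = sesq A x y + sesq A x z"
  using assms by (simp add: sesq_expand distrib_left sum.distrib)

lemma sesq_smult_left:
  assumes "A \<in> carrier_mat n n" "x \<in> carrier_vec n" "y \<in> carrier_vec n"
  shows "sesq A (c \<cdot>\<^sub>v x) y = cnj c * sesq A x y"
  using assms by (simp add: sesq_expand sum_distrib_left mult.assoc)

lemma sesq_smult_right:
  assumes "A \<in> carrier_mat n n" "x \<in> carrier_vec n" "y \<in> carrier_vec n"
  shows "sesq A x (c \<cdot>\<^sub>v y) = c * sesq A x y"
  using assms by (simp add: sesq_expand sum_distrib_left ac_simps)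

lemma sesq_zero_left: "A \<in> carrier_mat n n \<Longrightarrow> y \<in> carrier_vec n \<Longrightarrow> sesq A (0\<^sub>v n) y = 0"
  by (simp add: sesq_expand)

lemma sesq_zero_right: "A \<in> carrier_mat n n \<Longrightarrow> x \<in> carrier_vec n \<Longrightarrow> sesq A x (0\<^sub>v n) = 0"
  by (simp add: sesq_expand)

lemma sesq_smult_mat:
  assumes "A \<in> carrier_mat n n" "x \<in> carrier_vec n" "y \<in> carrier_vec n"
  shows "sesq (c \<cdot>\<^sub>m A) x y = c * sesq A x y"
  using assms by (simp add: sesq_expand[of _ n] sum_distrib_left ac_simps)

lemma sesq_uminus_add_mat:
  assumes "A \<in> carrier_mat n n" "B \<in> carrier_mat n n" "x \<in> carrier_vec n" "y \<in> carrier_vec n"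
  shows "sesq (- (A + B)) x y = - (sesq A x y + sesq B x y)"
proof -
  have "- (A + B) *\<^sub>v y = - (A *\<^sub>v y + B *\<^sub>v y)"
    using assms by (simp add: add_mult_distrib_mat_vec)
  then show ?thesis
    using assms by (simp add: sesq_def scalar_prod_add_distrib[of _ n])
qed

lemma sesq_scalar_one_mat:
  assumes "x \<in> carrier_vec n" "y \<in> carrier_vec n"
  shows "sesq (c \<cdot>\<^sub>m 1\<^sub>m n) x y = c * (conjugate x \<bullet> y)"
  using sesq_smult_mat[OF one_carrier_mat assms] assms by (simp add: sesq_def)

lemma sesq_unit_vec:
  assumes "A \<in> carrier_mat n n" "i < n" "j < n"
  shows "sesq A (unit_vec n i) (unit_vec n j) = A $$ (i,j)"
proof -
  have "conjugate (unit_vec n i) = (unit_vec n i :: complex vec)"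
    by (rule eq_vecI) (auto simp: unit_vec_def)
  then show ?thesis
    using assms by (simp add: sesq_def scalar_prod_left_unit[of _ n])
qed

lemma sesq_add_smult_self:
  assumes "A \<in> carrier_mat n n" "x \<in> carrier_vec n" "y \<in> carrier_vec n"
  shows "sesq A (x + c \<cdot>\<^sub>v y) (x + c \<cdot>\<^sub>v y)
    = sesq A x x + c * sesq A x y + cnj c * sesq A y x + cnj c * c * sesq A y y"
  using assms
  by (simp add: sesq_add_left[of A n] sesq_add_right[of A n] sesq_smult_left[of A n]
      sesq_smult_right[of A n] algebra_simps)

lemma hermitian_if_sesq_real:
  assumes A: "A \<in> carrier_mat n n" and real: "\<And>z. z \<in> carrier_vec n \<Longrightarrow> Im (sesq A z z) = 0"
  shows "mat_adjoint A = A"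
proof (rule eq_matI)
  show "dim_row (mat_adjoint A) = dim_row A" "dim_col (mat_adjoint A) = dim_col A"
    using A by (auto simp: mat_adjoint_def)
  fix i j assume "i < dim_row A" "j < dim_col A"
  then have i: "i < n" and j: "j < n" using A by auto
  let ?ei = "unit_vec n i :: complex vec" and ?ej = "unit_vec n j :: complex vec"
  have e: "?ei \<in> carrier_vec n" "?ej \<in> carrier_vec n" by auto
  note polar = sesq_add_smult_self[OF A e(2) e(1)] and entry = sesq_unit_vec[OF A]
  have "Im (sesq A ?ei ?ei) = 0" "Im (sesq A ?ej ?ej) = 0"
       "Im (sesq A (?ej + 1 \<cdot>\<^sub>v ?ei) (?ej + 1 \<cdot>\<^sub>v ?ei)) = 0"
       "Im (sesq A (?ej + \<i> \<cdot>\<^sub>v ?ei) (?ej + \<i> \<cdot>\<^sub>v ?ei)) = 0"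
    using real e by auto
  then have "Im (A $$ (j,i) + A $$ (i,j)) = 0" "Re (A $$ (j,i)) = Re (A $$ (i,j))"
    unfolding polar entry[OF i i] entry[OF j j] entry[OF i j] entry[OF j i] by auto
  moreover have "mat_adjoint A $$ (i,j) = cnj (A $$ (j,i))"
    using i j A by (simp add: mat_adjoint_def mat_of_rows_def cols_def)
  ultimately show "mat_adjoint A $$ (i,j) = A $$ (i,j)"
    by (simp add: complex_eq_iff)
qed

text \<open>On complex numbers \<open>0 \<le> z\<close> means that \<open>z\<close> is a nonnegative real (\<open>Complex_Order\<close>).\<close>

lemma psd_mat_iff_sesq_nonneg:
  "psd_mat n X \<longleftrightarrow> X \<in> carrier_mat n n \<and> (\<forall>v \<in> carrier_vec n. 0 \<le> sesq X v v)"
  by (auto simp: psd_mat_def less_eq_complex_def sesq_def intro: hermitian_if_sesq_real)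

lemma sesq_four_block_mat:
  assumes "A \<in> carrier_mat n n" "B \<in> carrier_mat n n" "C \<in> carrier_mat n n" "D \<in> carrier_mat n n"
    and "x \<in> carrier_vec n" "y \<in> carrier_vec n" "z \<in> carrier_vec n" "w \<in> carrier_vec n"
  shows "sesq (four_block_mat A B C D) (x @\<^sub>v z) (y @\<^sub>v w)
     = sesq A x y + sesq B x w + sesq C z y + sesq D z w"
proof -
  have "conjugate (x @\<^sub>v z) = conjugate x @\<^sub>v conjugate z"
    by (rule eq_vecI) auto
  then show ?thesis
    using assms by (simp add: sesq_def four_block_mat_mult_vec[of _ n n]
        scalar_prod_append[of _ n _ n] scalar_prod_add_distrib[of _ n])
qed

lemma sesq_nonneg_diagonal_blocks:
  assumes "A \<in> carrier_mat n n" "B \<in> carrier_mat n n" "C \<in> carrier_mat n n" "D \<in> carrier_mat n n"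
    and nonneg: "\<forall>v \<in> carrier_vec (n+n). 0 \<le> sesq (four_block_mat A B C D) v v"
    and z: "z \<in> carrier_vec n"
  shows "0 \<le> sesq A z z" "0 \<le> sesq D z z"
proof -
  have "sesq (four_block_mat A B C D) (z @\<^sub>v 0\<^sub>v n) (z @\<^sub>v 0\<^sub>v n) = sesq A z z"
       "sesq (four_block_mat A B C D) (0\<^sub>v n @\<^sub>v z) (0\<^sub>v n @\<^sub>v z) = sesq D z z"
    using assms by (simp_all add: sesq_four_block_mat[of _ n] sesq_zero_left[of _ n] sesq_zero_right[of _ n])
  moreover have "z @\<^sub>v 0\<^sub>v n \<in> carrier_vec (n+n)" "0\<^sub>v n @\<^sub>v z \<in> carrier_vec (n+n)"
    using z by auto
  ultimately show "0 \<le> sesq A z z" "0 \<le> sesq D z z"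
    using nonneg by metis+
qed

lemma mtrace_nonneg:
  assumes Y: "Y \<in> carrier_mat n n" and nonneg: "\<forall>z \<in> carrier_vec n. 0 \<le> sesq Y z z"
  shows "0 \<le> mtrace Y"
  unfolding mtrace_def
proof (rule sum_nonneg)
  fix i assume "i \<in> {..<dim_row Y}"
  then have "i < n" using Y by simp
  then show "0 \<le> Y $$ (i,i)"
    using nonneg sesq_unit_vec[OF Y, of i i] by (metis unit_vec_carrier)
qed

lemma complex_nonneg_mult_cancel_left:
  fixes c z :: complex
  assumes "0 < c" "0 \<le> c * z"
  shows "0 \<le> z"
  using assms by (auto simp: less_eq_complex_def less_complex_def zero_le_mult_iff)

lemma cnj_complex_nonneg: "0 \<le> (z::complex) \<Longrightarrow> cnj z = z"
  by (simp add: less_eq_complex_def complex_eq_iff)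

lemma conjugate_sprod_self_nonneg:
  fixes u :: "complex vec"
  assumes "u \<in> carrier_vec n"
  shows "0 \<le> conjugate u \<bullet> u"
  using conjugate_square_ge_0_vec[of u] assms by (simp add: comm_scalar_prod[of _ n])

lemma conjugate_sprod_self_eq_0_iff:
  fixes u :: "complex vec"
  assumes "u \<in> carrier_vec n"
  shows "conjugate u \<bullet> u = 0 \<longleftrightarrow> u = 0\<^sub>v n"
  using conjugate_square_eq_0_vec[OF assms] assms by (simp add: comm_scalar_prod[of _ n])

lemma sum_delta_left:
  fixes f :: "nat \<Rightarrow> complex"
  shows "i < n \<Longrightarrow> (\<Sum>k<n. (if i = k then c else 0) * f k) = c * f i"
  by (simp add: if_distrib[of "\<lambda>x. x * _"] cong: if_cong)

lemma sum_cnj_mult_complement_entries: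
  fixes u r :: "complex vec" and \<alpha> :: complex
  assumes i: "i < n" and j: "j < n" and real: "cnj \<alpha> = \<alpha>"
    and uu: "(\<Sum>k<n. cnj (u$k) * u$k) = \<alpha>" and rr: "(\<Sum>k<n. cnj (r$k) * r$k) = \<alpha>"
    and ur: "(\<Sum>k<n. cnj (u$k) * r$k) = 0"
  shows "(\<Sum>k<n. cnj ((if i = k then \<alpha> else 0) - u$i * cnj (u$k) - r$i * cnj (r$k))
                 * ((if j = k then \<alpha> else 0) - u$j * cnj (u$k) - r$j * cnj (r$k)))
       = \<alpha> * ((if i = j then \<alpha> else 0) - cnj (u$i) * u$j - cnj (r$i) * r$j)"
proof -
  have ru: "(\<Sum>k<n. cnj (r$k) * u$k) = 0"
    using arg_cong[OF ur, of cnj] by (simp add: mult.commute)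
  let ?dj = "\<lambda>k. if j = k then \<alpha> else 0"
  have di: "cnj (if i = k then \<alpha> else 0) = (if i = k then \<alpha> else 0)" for k
    using real by simp
  have "(\<Sum>k<n. cnj ((if i = k then \<alpha> else 0) - u$i * cnj (u$k) - r$i * cnj (r$k))
                 * (?dj k - u$j * cnj (u$k) - r$j * cnj (r$k)))
     = (\<Sum>k<n. (if i = k then \<alpha> else 0) * (?dj k - u$j * cnj (u$k) - r$j * cnj (r$k)))
       - cnj (u$i) * (\<Sum>k<n. ?dj k * u$k) - cnj (r$i) * (\<Sum>k<n. ?dj k * r$k)
       + cnj (u$i) * u$j * (\<Sum>k<n. cnj (u$k) * u$k) + cnj (u$i) * r$j * (\<Sum>k<n. cnj (r$k) * u$k)
       + cnj (r$i) * u$j * (\<Sum>k<n. cnj (u$k) * r$k) + cnj (r$i) * r$j * (\<Sum>k<n. cnj (r$k) * r$k)"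
    by (simp add: di algebra_simps sum.distrib sum_subtractf sum_distrib_left)
  also have "\<dots> = \<alpha> * ((if i = j then \<alpha> else 0) - cnj (u$i) * u$j - cnj (r$i) * r$j)"
    unfolding sum_delta_left[OF i] sum_delta_left[OF j] uu rr ur ru using real
    by (cases "i = j") (simp_all add: algebra_simps)
  finally show ?thesis .
qed

text \<open>\<open>c k\<close> is the \<open>k\<close>-th column of \<open>\<alpha> 1 - u u\<^sup>* - r r\<^sup>*\<close>, which is \<open>\<alpha>\<close> times the
  orthogonal projection onto the complement of \<open>u, r\<close>; so its square is \<open>\<alpha>\<close> times itself.\<close>

lemma sum_sesq_complement_columns:
  fixes Y :: "complex mat" and u r :: "complex vec" and \<alpha> :: complex
  assumes Y: "Y \<in> carrier_mat n n" and u: "u \<in> carrier_vec n" and r: "r \<in> carrier_vec n"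
    and real: "cnj \<alpha> = \<alpha>"
    and uu: "conjugate u \<bullet> u = \<alpha>" and rr: "conjugate r \<bullet> r = \<alpha>" and ur: "conjugate u \<bullet> r = 0"
  defines "c k \<equiv> vec n (\<lambda>j. (if j = k then \<alpha> else 0) - u$j * cnj (u$k) - r$j * cnj (r$k))"
  shows "(\<Sum>k<n. sesq Y (c k) (c k)) = \<alpha> * (\<alpha> * mtrace Y - sesq Y u u - sesq Y r r)"
proof -
  have gram: "(\<Sum>k<n. cnj (c k $ i) * c k $ j)
      = \<alpha> * ((if i = j then \<alpha> else 0) - cnj (u$i) * u$j - cnj (r$i) * r$j)"
    if "i < n" "j < n" for i j
  proof -
    have "(\<Sum>k<n. cnj (u$k) * u$k) = \<alpha>" "(\<Sum>k<n. cnj (r$k) * r$k) = \<alpha>" "(\<Sum>k<n. cnj (u$k) * r$k) = 0"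
      using u r uu rr ur by (simp_all add: scalar_prod_def atLeast0LessThan)
    from sum_cnj_mult_complement_entries[OF that real this]
    show ?thesis using that unfolding c_def by simp
  qed
  have "(\<Sum>k<n. sesq Y (c k) (c k)) = (\<Sum>k<n. \<Sum>i<n. \<Sum>j<n. cnj (c k $ i) * Y$$(i,j) * c k $ j)"
    using Y unfolding c_def by (simp add: sesq_expand)
  also have "\<dots> = (\<Sum>i<n. \<Sum>j<n. \<Sum>k<n. cnj (c k $ i) * Y$$(i,j) * c k $ j)"
    by (subst sum.swap) (rule sum.cong[OF refl], rule sum.swap)
  also have "\<dots> = (\<Sum>i<n. \<Sum>j<n. Y$$(i,j) * (\<Sum>k<n. cnj (c k $ i) * c k $ j))"
    by (simp add: sum_distrib_left ac_simps)
  also have "\<dots> = (\<Sum>i<n. \<Sum>j<n. \<alpha> * (Y$$(i,j) * (if i = j then \<alpha> else 0))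
       - \<alpha> * (cnj (u$i) * Y$$(i,j) * u$j) - \<alpha> * (cnj (r$i) * Y$$(i,j) * r$j))"
    by (intro sum.cong refl) (simp add: gram right_diff_distrib)
  also have "\<dots> = \<alpha> * (\<Sum>i<n. Y$$(i,i) * \<alpha>)
       - \<alpha> * (\<Sum>i<n. \<Sum>j<n. cnj (u$i) * Y$$(i,j) * u$j) - \<alpha> * (\<Sum>i<n. \<Sum>j<n. cnj (r$i) * Y$$(i,j) * r$j)"
    by (simp add: sum.distrib sum_subtractf sum_distrib_left if_distrib[of "\<lambda>x. _ * x"] cong: if_cong)
  also have "\<dots> = \<alpha> * (\<alpha> * mtrace Y - sesq Y u u - sesq Y r r)"
    using Y u r by (simp add: mtrace_def sesq_expand sum_distrib_left algebra_simps)
  finally show ?thesis .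
qed

lemma sesq_orthogonal_pair_le_trace:
  fixes Y :: "complex mat" and u r :: "complex vec"
  assumes Y: "Y \<in> carrier_mat n n" and nonneg: "\<forall>z \<in> carrier_vec n. 0 \<le> sesq Y z z"
    and u: "u \<in> carrier_vec n" and r: "r \<in> carrier_vec n"
    and rr: "conjugate r \<bullet> r = conjugate u \<bullet> u" and ur: "conjugate u \<bullet> r = 0"
  shows "sesq Y u u + sesq Y r r \<le> (conjugate u \<bullet> u) * mtrace Y"
proof (cases "u = 0\<^sub>v n")
  case True
  then have "r = 0\<^sub>v n"
    using rr conjugate_sprod_self_eq_0_iff[OF r] u by simp
  with True show ?thesis using Y by (simp add: sesq_zero_left[of _ n])
next
  case False
  define \<alpha> where "\<alpha> = conjugate u \<bullet> u"
  have "0 \<le> \<alpha>" "\<alpha> \<noteq> 0"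
    unfolding \<alpha>_def using conjugate_sprod_self_nonneg[OF u] conjugate_sprod_self_eq_0_iff[OF u] False
    by auto
  then have pos: "0 < \<alpha>" by simp
  define c where "c k = vec n (\<lambda>j. (if j = k then \<alpha> else 0) - u$j * cnj (u$k) - r$j * cnj (r$k))" for k
  have "0 \<le> (\<Sum>k<n. sesq Y (c k) (c k))"
    using nonneg by (intro sum_nonneg) (simp add: c_def)
  also have "\<dots> = \<alpha> * (\<alpha> * mtrace Y - sesq Y u u - sesq Y r r)"
    unfolding c_def using \<open>0 \<le> \<alpha>\<close> rr ur
    by (intro sum_sesq_complement_columns[OF Y u r]) (simp_all add: \<alpha>_def cnj_complex_nonneg)
  finally have "0 \<le> \<alpha> * mtrace Y - sesq Y u u - sesq Y r r"
    by (rule complex_nonneg_mult_cancel_left[OF pos])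
  then show ?thesis
    unfolding \<alpha>_def by (simp only: diff_diff_eq diff_ge_0_iff_ge)
qed

lemma mat_adjoint_mult_vec:
  fixes U :: "complex mat"
  assumes U: "U \<in> carrier_mat n n" and b: "b \<in> carrier_vec n"
  shows "mat_adjoint U *\<^sub>v b = conjugate (transpose_mat U *\<^sub>v conjugate b)"
proof (rule eq_vecI)
  fix i assume "i < dim_vec (conjugate (transpose_mat U *\<^sub>v conjugate b))"
  then have i: "i < n" using U by auto
  have "(mat_adjoint U *\<^sub>v b) $ i = (\<Sum>j<n. cnj (U$$(j,i)) * b$j)"
    using U b i unfolding mat_adjoint_def mult_mat_vec_def scalar_prod_def
    by (auto simp: mat_of_rows_def cols_def atLeast0LessThan intro!: sum.cong)
  also have "\<dots> = conjugate (transpose_mat U *\<^sub>v conjugate b) $ i"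
    using U b i unfolding mult_mat_vec_def scalar_prod_def
    by (auto simp: atLeast0LessThan sum_conjugate intro!: sum.cong)
  finally show "(mat_adjoint U *\<^sub>v b) $ i = conjugate (transpose_mat U *\<^sub>v conjugate b) $ i" .
qed (use U b in \<open>auto simp: mat_adjoint_def\<close>)

lemma sesq_mult_transpose_mult_adjoint:
  assumes U: "U \<in> carrier_mat n n" and M: "M \<in> carrier_mat n n"
    and a: "a \<in> carrier_vec n" and b: "b \<in> carrier_vec n"
  shows "sesq (U * transpose_mat M * mat_adjoint U) a b
    = sesq M (transpose_mat U *\<^sub>v conjugate b) (transpose_mat U *\<^sub>v conjugate a)"
proof -
  let ?z = "mat_adjoint U *\<^sub>v b" and ?r = "transpose_mat U *\<^sub>v conjugate a"
  have Ua: "mat_adjoint U \<in> carrier_mat n n" using U by (auto simp: mat_adjoint_def)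
  then have z: "?z \<in> carrier_vec n" and r: "?r \<in> carrier_vec n" using U a b by auto
  have "sesq (U * transpose_mat M * mat_adjoint U) a b = conjugate a \<bullet> (U *\<^sub>v (transpose_mat M *\<^sub>v ?z))"
    unfolding sesq_def using U M Ua b by (subst assoc_mult_mat_vec[of _ n n]) auto
  also have "\<dots> = ?r \<bullet> (transpose_mat M *\<^sub>v ?z)"
    using U M a z by (simp add: transpose_vec_mult_scalar[of _ n n])
  also have "\<dots> = (M *\<^sub>v ?r) \<bullet> ?z"
    using transpose_vec_mult_scalar[of "transpose_mat M" n n ?z ?r] M r z by auto
  also have "\<dots> = ?z \<bullet> (M *\<^sub>v ?r)"
    using M r z by (simp add: comm_scalar_prod[of _ n])
  finally show ?thesis
    unfolding sesq_def mat_adjoint_mult_vec[OF U b] by simp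
qed

lemma unitary_transpose_conjugate_sprod_self:
  fixes U :: "complex mat"
  assumes U: "unitary_mat n U" and b: "b \<in> carrier_vec n"
  defines "w \<equiv> transpose_mat U *\<^sub>v conjugate b"
  shows "conjugate w \<bullet> w = conjugate b \<bullet> b"
proof -
  have Uc: "U \<in> carrier_mat n n" and UU: "U * mat_adjoint U = 1\<^sub>m n"
    using U unfolding unitary_mat_def by auto
  have Ua: "mat_adjoint U \<in> carrier_mat n n" using Uc by (auto simp: mat_adjoint_def)
  have "conjugate w \<bullet> w = (mat_adjoint U *\<^sub>v b) \<bullet> (transpose_mat U *\<^sub>v conjugate b)"
    unfolding w_def by (simp add: mat_adjoint_mult_vec[OF Uc b])
  also have "\<dots> = conjugate b \<bullet> (U *\<^sub>v (mat_adjoint U *\<^sub>v b))"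
    using Uc Ua b transpose_vec_mult_scalar[of U n n "mat_adjoint U *\<^sub>v b" "conjugate b"]
    by (simp add: comm_scalar_prod[of _ n])
  also have "U *\<^sub>v (mat_adjoint U *\<^sub>v b) = b"
    using UU Uc Ua b by (metis assoc_mult_mat_vec one_mult_mat_vec)
  finally show ?thesis .
qed

lemma antisymmetric_sprod_mult_self:
  fixes A :: "complex mat"
  assumes A: "A \<in> carrier_mat n n" and anti: "transpose_mat A = - A" and x: "x \<in> carrier_vec n"
  shows "x \<bullet> (A *\<^sub>v x) = 0"
proof -
  have "x \<bullet> (A *\<^sub>v x) = (transpose_mat A *\<^sub>v x) \<bullet> x"
    using A x by (simp add: transpose_vec_mult_scalar[of _ n n])
  also have "\<dots> = - (x \<bullet> (A *\<^sub>v x))"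
    using A x by (simp add: anti comm_scalar_prod[of _ n])
  finally show ?thesis by simp
qed

lemma four_block_cross_terms_le_traces:
  fixes X11 X12 X21 X22 :: "complex mat" and a b r p :: "complex vec"
  assumes X11: "X11 \<in> carrier_mat n n" and X12: "X12 \<in> carrier_mat n n"
    and X21: "X21 \<in> carrier_mat n n" and X22: "X22 \<in> carrier_mat n n"
    and nonneg: "\<forall>v \<in> carrier_vec (n+n). 0 \<le> sesq (four_block_mat X11 X12 X21 X22) v v"
    and a: "a \<in> carrier_vec n" and r: "r \<in> carrier_vec n"
    and b: "b \<in> carrier_vec n" and p: "p \<in> carrier_vec n"
    and rr: "conjugate r \<bullet> r = conjugate a \<bullet> a" and ar: "conjugate a \<bullet> r = 0"
    and pp: "conjugate p \<bullet> p = conjugate b \<bullet> b" and bp: "conjugate b \<bullet> p = 0"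
  shows "sesq X12 a b + sesq X21 b a + sesq X12 r p + sesq X21 p r
    \<le> (conjugate a \<bullet> a) * mtrace X22 + (conjugate b \<bullet> b) * mtrace X11"
proof -
  define \<alpha> where "\<alpha> = conjugate a \<bullet> a"
  define \<beta> where "\<beta> = conjugate b \<bullet> b"
  have \<alpha>0: "0 \<le> \<alpha>" and \<beta>0: "0 \<le> \<beta>"
    unfolding \<alpha>_def \<beta>_def using a b by (simp_all add: conjugate_sprod_self_nonneg)
  note diag = sesq_nonneg_diagonal_blocks[OF X11 X12 X21 X22 nonneg]
  have T11: "0 \<le> mtrace X11" and T22: "0 \<le> mtrace X22"
    using diag by (simp_all add: mtrace_nonneg[OF X11] mtrace_nonneg[OF X22])
  consider "a = 0\<^sub>v n" | "b = 0\<^sub>v n" | "0 < \<alpha>" "0 < \<beta>"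
    using \<alpha>0 \<beta>0 a b unfolding \<alpha>_def \<beta>_def
    by (metis conjugate_sprod_self_eq_0_iff order_le_less)
  then show ?thesis
  proof cases
    case 1
    then have "r = 0\<^sub>v n" using rr a r by (simp add: conjugate_sprod_self_eq_0_iff)
    with 1 show ?thesis
      using X12 X21 X11 b p T11 \<beta>0 by (simp add: sesq_zero_left sesq_zero_right \<beta>_def)
  next
    case 2
    then have "p = 0\<^sub>v n" using pp b p by (simp add: conjugate_sprod_self_eq_0_iff)
    with 2 show ?thesis
      using X12 X21 X22 a r T22 \<alpha>0 by (simp add: sesq_zero_left sesq_zero_right \<alpha>_def)
  next
    case 3
    txt \<open>\<open>\<alpha> \<beta>\<close> times the difference is \<open>Q a b + Q r p\<close> plus the two trace defects.\<close>
    define F where "F = four_block_mat X11 X12 X21 X22"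
    define Q where "Q x y = sesq F (\<beta> \<cdot>\<^sub>v x @\<^sub>v (- \<alpha>) \<cdot>\<^sub>v y) (\<beta> \<cdot>\<^sub>v x @\<^sub>v (- \<alpha>) \<cdot>\<^sub>v y)" for x y
    have Q: "Q x y = \<beta> * \<beta> * sesq X11 x x - \<alpha> * \<beta> * (sesq X12 x y + sesq X21 y x)
                    + \<alpha> * \<alpha> * sesq X22 y y" if "x \<in> carrier_vec n" "y \<in> carrier_vec n" for x y
      using that X11 X12 X21 X22 \<alpha>0 \<beta>0
      by (simp add: Q_def F_def sesq_four_block_mat[of _ n] sesq_smult_left[of _ n]
          sesq_smult_right[of _ n] cnj_complex_nonneg algebra_simps)
    have "0 \<le> Q a b" "0 \<le> Q r p"
      using nonneg a b r p unfolding Q_def F_def by auto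
    moreover have "sesq X11 a a + sesq X11 r r \<le> \<alpha> * mtrace X11"
      unfolding \<alpha>_def using diag(1) by (intro sesq_orthogonal_pair_le_trace[OF X11 _ a r rr ar]) simp
    moreover have "sesq X22 b b + sesq X22 p p \<le> \<beta> * mtrace X22"
      unfolding \<beta>_def using diag(2) by (intro sesq_orthogonal_pair_le_trace[OF X22 _ b p pp bp]) simp
    ultimately have "0 \<le> Q a b + Q r p + \<beta> * \<beta> * (\<alpha> * mtrace X11 - sesq X11 a a - sesq X11 r r)
                       + \<alpha> * \<alpha> * (\<beta> * mtrace X22 - sesq X22 b b - sesq X22 p p)"
      using \<alpha>0 \<beta>0 by (intro add_nonneg_nonneg mult_nonneg_nonneg) (simp_all add: diff_diff_eq)
    also have "\<dots> = \<alpha> * (\<beta> * (\<alpha> * mtrace X22 + \<beta> * mtrace X11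
                     - (sesq X12 a b + sesq X21 b a + sesq X12 r p + sesq X21 p r)))"
      using a b r p by (simp add: Q algebra_simps)
    finally show ?thesis
      using complex_nonneg_mult_cancel_left 3 unfolding \<alpha>_def \<beta>_def
      by (metis diff_ge_0_iff_ge)
  qed
qed

lemma sesq_Phi_blocks_nonneg:
  fixes X11 X12 X21 X22 U :: "complex mat" and v :: "complex vec"
  assumes X11: "X11 \<in> carrier_mat n n" and X12: "X12 \<in> carrier_mat n n"
    and X21: "X21 \<in> carrier_mat n n" and X22: "X22 \<in> carrier_mat n n"
    and nonneg: "\<forall>v \<in> carrier_vec (n+n). 0 \<le> sesq (four_block_mat X11 X12 X21 X22) v v"
    and unitary: "unitary_mat n U" and anti: "transpose_mat U = - U"
    and v: "v \<in> carrier_vec (n+n)"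
  defines "F \<equiv> four_block_mat (mtrace X22 \<cdot>\<^sub>m 1\<^sub>m n)
                    (- (X12 + U * transpose_mat X21 * mat_adjoint U))
                    (- (X21 + U * transpose_mat X12 * mat_adjoint U))
                    (mtrace X11 \<cdot>\<^sub>m 1\<^sub>m n)"
  shows "0 \<le> sesq F v v"
proof -
  have U: "U \<in> carrier_mat n n" using unitary by (simp add: unitary_mat_def)
  then have Ua: "mat_adjoint U \<in> carrier_mat n n" by (auto simp: mat_adjoint_def)
  define a b where "a = vec_first v n" and "b = vec_last v n"
  define r p where "r = transpose_mat U *\<^sub>v conjugate a" and "p = transpose_mat U *\<^sub>v conjugate b"
  have vecs: "a \<in> carrier_vec n" "b \<in> carrier_vec n" "r \<in> carrier_vec n" "p \<in> carrier_vec n"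
    using U by (simp_all add: a_def b_def r_def p_def)
  have v_split: "v = a @\<^sub>v b" using v by (simp add: a_def b_def)
  have anti_T: "transpose_mat (transpose_mat U) = - transpose_mat U"
    by (simp add: anti transpose_uminus)
  have "conjugate a \<bullet> r = 0" "conjugate b \<bullet> p = 0"
    using U vecs unfolding r_def p_def
    by (simp_all add: antisymmetric_sprod_mult_self[OF _ anti_T])
  moreover have "conjugate r \<bullet> r = conjugate a \<bullet> a" "conjugate p \<bullet> p = conjugate b \<bullet> b"
    unfolding r_def p_def using unitary vecs by (simp_all add: unitary_transpose_conjugate_sprod_self)
  ultimately have cross: "sesq X12 a b + sesq X21 b a + sesq X12 r p + sesq X21 p r
      \<le> (conjugate a \<bullet> a) * mtrace X22 + (conjugate b \<bullet> b) * mtrace X11"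
    by (intro four_block_cross_terms_le_traces[OF X11 X12 X21 X22 nonneg]) (use vecs in simp_all)
  have "sesq (U * transpose_mat X21 * mat_adjoint U) a b = sesq X21 p r"
       "sesq (U * transpose_mat X12 * mat_adjoint U) b a = sesq X12 r p"
    unfolding r_def p_def using U X12 X21 vecs by (simp_all add: sesq_mult_transpose_mult_adjoint)
  then have "sesq F v v
     = (conjugate a \<bullet> a) * mtrace X22 + (conjugate b \<bullet> b) * mtrace X11
       - (sesq X12 a b + sesq X21 b a + sesq X12 r p + sesq X21 p r)"
    using X11 X12 X21 X22 U Ua vecs unfolding F_def v_split
    by (simp add: sesq_four_block_mat[of _ n] sesq_scalar_one_mat sesq_uminus_add_mat[of _ n]
        algebra_simps)
  with cross show ?thesis by simp
qed

theorem proposition1: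
  fixes N :: nat and U :: "complex mat"
  assumes "N \<ge> 1"
    and "unitary_mat (2*N) U"
    and "transpose_mat U = - U"
  shows "\<forall>X. psd_mat (4*N) X \<longrightarrow> psd_mat (4*N) (Phi N U X)"
proof (intro allI impI)
  fix X assume "psd_mat (4*N) X"
  define n where "n = 2*N"
  have n4: "4*N = n+n" by (simp add: n_def)
  have X: "X \<in> carrier_mat (n+n) (n+n)" and nonneg: "\<forall>v \<in> carrier_vec (n+n). 0 \<le> sesq X v v"
    using \<open>psd_mat (4*N) X\<close> unfolding n4 psd_mat_iff_sesq_nonneg by simp_all
  obtain X11 X12 X21 X22 where split: "split_block X n n = (X11, X12, X21, X22)"
    using prod_cases4 by blast
  note blocks = split_block[OF split, of n n] X
  define F where "F = four_block_mat (mtrace X22 \<cdot>\<^sub>m 1\<^sub>m n)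
    (- (X12 + U * transpose_mat X21 * mat_adjoint U)) (- (X21 + U * transpose_mat X12 * mat_adjoint U))
    (mtrace X11 \<cdot>\<^sub>m 1\<^sub>m n)"
  have Phi: "Phi N U X = (1 / of_nat n) \<cdot>\<^sub>m F"
    unfolding Phi_def F_def n_def[symmetric] split by simp
  have F: "F \<in> carrier_mat (n+n) (n+n)"
    using blocks \<open>unitary_mat (2*N) U\<close> by (auto simp: F_def n_def unitary_mat_def mat_adjoint_def)
  have "0 \<le> sesq (Phi N U X) v v" if v: "v \<in> carrier_vec (n+n)" for v
  proof -
    have "0 \<le> sesq F v v"
      unfolding F_def using blocks nonneg assms(2,3) v
      by (intro sesq_Phi_blocks_nonneg) (auto simp: n_def)
    moreover have "(0::complex) \<le> 1 / of_nat n"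
      by (simp add: less_eq_complex_def)
    ultimately show ?thesis
      unfolding Phi sesq_smult_mat[OF F v v] by (rule mult_nonneg_nonneg[rotated])
  qed
  with F show "psd_mat (4*N) (Phi N U X)"
    unfolding psd_mat_iff_sesq_nonneg Phi n4 by simp
qed

end
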